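(* Let $V\neq\emptyset$, let $\kappa$ be a cardinal with $|V|\ge\kappa\ge\aleph_0$, and let $F\colon V\leadsto V$ be a strict multifunction. Then $\mathrm{Wall}_{\kappa}(F,V)$ is a proper filter on $V$.
   Context: A multifunction $F\colon V\leadsto V$ is a map $V\to P(V)$; it is strict if $F(v)\neq\emptyset$ for all $v$. For $B\subset V$, $F_{+}(B)=\{x\in V\mid F(x)\subset B\}$. $\mathrm{Wall}_{\kappa}(F,V)=\{U\subset V\mid |V\setminus F_{+}(U)|<\kappa\}$. A filter on $V$ is a nonempty family $\Phi\subset P(V)$ such that for all $A,B\subset V$: $A\in\Phi$ and $B\in\Phi$ iff $A\cap B\in\Phi$; it is proper if $\emptyset\notin\Phi$. *)

theory Defs
  imports Main
begin

text \<open>A multifunction F on V is modelled as a function F :: 'a => 'a set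
  together with the assumption that F v is a subset of V for v in V.\<close>

definition upper_inv :: "'a set \<Rightarrow> ('a \<Rightarrow> 'a set) \<Rightarrow> 'a set \<Rightarrow> 'a set" where
  "upper_inv V F B = {x \<in> V. F x \<subseteq> B}"

text \<open>Cardinals are represented as cardinal-order relations (Card_order).\<close>
definition Wall :: "'b rel \<Rightarrow> ('a \<Rightarrow> 'a set) \<Rightarrow> 'a set \<Rightarrow> 'a set set" where
  "Wall \<kappa> F V = {U. U \<subseteq> V \<and> (card_of (V - upper_inv V F U), \<kappa>) \<in> ordLess}"

definition is_filter_on :: "'a set \<Rightarrow> 'a set set \<Rightarrow> bool" where
  "is_filter_on V \<Phi> \<longleftrightarrow> \<Phi> \<noteq> {} \<and> \<Phi> \<subseteq> Pow V \<and>
     (\<forall>A B. A \<subseteq> V \<longrightarrow> B \<subseteq> V \<longrightarrow> ((A \<in> \<Phi> \<and> B \<in> \<Phi>) \<longleftrightarrow> A \<inter> B \<in> \<Phi>))"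

definition proper_filter_on :: "'a set \<Rightarrow> 'a set set \<Rightarrow> bool" where
  "proper_filter_on V \<Phi> \<longleftrightarrow> is_filter_on V \<Phi> \<and> {} \<notin> \<Phi>"

end

theory Submission
  imports Defs
begin

text \<open>A point lies outside \<open>F\<^sub>+(U)\<close> as soon as \<open>F\<close> sends it somewhere outside \<open>U\<close>, so the
  complement of \<open>F\<^sub>+(A \<inter> B)\<close> is the union of the complements of \<open>F\<^sub>+(A)\<close> and \<open>F\<^sub>+(B)\<close>.
  Since two sets of size \<open>< \<kappa>\<close> have a union of size \<open>< \<kappa>\<close> for infinite \<open>\<kappa>\<close>, the
  wall is closed under intersections and upward closed. It contains \<open>V\<close>, because
  \<open>F\<^sub>+(V) = V\<close>, and misses \<open>\<emptyset>\<close>, because strictness gives \<open>F\<^sub>+(\<emptyset>) = \<emptyset>\<close> and \<open>|V| \<ge> \<kappa>\<close>.\<close>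

unbundle cardinal_syntax

lemma Diff_upper_inv_Int:
  "V - upper_inv V F (A \<inter> B) = (V - upper_inv V F A) \<union> (V - upper_inv V F B)"
  by (auto simp: upper_inv_def)

lemma Diff_upper_inv_antimono:
  "A \<subseteq> B \<Longrightarrow> V - upper_inv V F B \<subseteq> V - upper_inv V F A"
  by (auto simp: upper_inv_def)

lemma upper_inv_self: "\<forall>v\<in>V. F v \<subseteq> V \<Longrightarrow> upper_inv V F V = V"
  by (auto simp: upper_inv_def)

lemma upper_inv_empty: "\<forall>v\<in>V. F v \<noteq> {} \<Longrightarrow> upper_inv V F {} = {}"
  by (auto simp: upper_inv_def)

lemma Wall_subset_Pow: "Wall \<kappa> F V \<subseteq> Pow V"
  by (auto simp: Wall_def)

lemma Wall_Int_iff: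
  assumes "Card_order \<kappa>" and "\<not> finite (Field \<kappa>)" and "A \<subseteq> V" and "B \<subseteq> V"
  shows "A \<inter> B \<in> Wall \<kappa> F V \<longleftrightarrow> A \<in> Wall \<kappa> F V \<and> B \<in> Wall \<kappa> F V"
proof
  assume "A \<inter> B \<in> Wall \<kappa> F V"
  then have small: "|V - upper_inv V F (A \<inter> B)| <o \<kappa>"
    by (simp add: Wall_def)
  have "|V - upper_inv V F C| <o \<kappa>" if "A \<inter> B \<subseteq> C" for C
    using ordLeq_ordLess_trans[OF card_of_mono1[OF Diff_upper_inv_antimono[OF that]] small] .
  then show "A \<in> Wall \<kappa> F V \<and> B \<in> Wall \<kappa> F V"
    using assms(3,4) by (simp add: Wall_def)
next
  assume "A \<in> Wall \<kappa> F V \<and> B \<in> Wall \<kappa> F V"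
  then show "A \<inter> B \<in> Wall \<kappa> F V"
    using card_of_Un_ordLess_infinite_Field[OF assms(2,1)]
    by (auto simp: Wall_def Diff_upper_inv_Int)
qed

lemma self_in_Wall:
  fixes V :: "'a set" and \<kappa> :: "'b rel"
  assumes "Card_order \<kappa>" and "Field \<kappa> \<noteq> {}" and "\<forall>v\<in>V. F v \<subseteq> V"
  shows "V \<in> Wall \<kappa> F V"
proof -
  have "\<not> \<kappa> \<le>o |{} :: 'a set|"
  proof
    assume "\<kappa> \<le>o |{} :: 'a set|"
    then have "|Field \<kappa>| \<le>o |{} :: 'a set|"
      using ordIso_ordLeq_trans[OF card_of_Field_ordIso[OF assms(1)]] by blast
    with assms(2) show False
      using card_of_empty3 by blast
  qed
  then have "|{} :: 'a set| <o \<kappa>"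
    using not_ordLeq_iff_ordLess[OF card_of_Well_order card_order_on_well_order_on[OF assms(1)]]
    by blast
  then show ?thesis
    by (simp add: Wall_def upper_inv_self[OF assms(3)])
qed

lemma empty_notin_Wall:
  assumes "\<kappa> \<le>o |V|" and "\<forall>v\<in>V. F v \<noteq> {}"
  shows "{} \<notin> Wall \<kappa> F V"
  using assms not_ordLess_ordLeq by (auto simp: Wall_def upper_inv_empty)

lemma Wall_proper_filter_on:
  assumes "Card_order \<kappa>" and "\<not> finite (Field \<kappa>)" and "\<kappa> \<le>o |V|"
    and "\<forall>v\<in>V. F v \<subseteq> V" and "\<forall>v\<in>V. F v \<noteq> {}"
  shows "proper_filter_on V (Wall \<kappa> F V)"
proof -
  have "Field \<kappa> \<noteq> {}"
    using assms(2) by auto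
  then have "V \<in> Wall \<kappa> F V"
    using self_in_Wall assms(1,4) by blast
  then show ?thesis
    unfolding proper_filter_on_def is_filter_on_def
    using Wall_subset_Pow[of \<kappa> F V] Wall_Int_iff[OF assms(1,2), where V = V and F = F]
      empty_notin_Wall[OF assms(3,5)]
    by blast
qed

theorem lemma6p6:
  fixes V :: "'a set" and F :: "'a \<Rightarrow> 'a set" and \<kappa> :: "'b rel"
  assumes "V \<noteq> {}"
    and "Card_order \<kappa>"
    and "(natLeq, \<kappa>) \<in> ordLeq"
    and "(\<kappa>, card_of V) \<in> ordLeq"
    and "\<forall>v\<in>V. F v \<subseteq> V"
    and "\<forall>v\<in>V. F v \<noteq> {}"
  shows "proper_filter_on V (Wall \<kappa> F V)"
proof -
  have "cinfinite \<kappa>"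
    using cinfinite_mono[OF assms(3) natLeq_cinfinite] .
  then show ?thesis
    using Wall_proper_filter_on assms(2,4-6)
    unfolding BNF_Cardinal_Arithmetic.cinfinite_def by blast
qed

end
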